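(* In the no-regret model with signal sets $S_i=A_i\sqcup\{\bot\}$, consider the following principal algorithm with hyperparameter $L$. For each agent $i=1,\dots,n$ and each $a_{-i}\in A_{-i}$: set $\mathbf{p}^1=\mathbf{1}\in\mathbb{R}^{A_i}$; for $\ell=1,\dots,L$ (one round $t$ each), set $P_i^t(\cdot)=\mathbf{p}^\ell[\cdot]$ and $P_j^t(a_j')=2\cdot\mathbb{1}[a_j'=a_j]$ for all $j\ne i$ (where $a_j$ is $j$'s action in $a_{-i}$), send signals $s_i^t=\bot$ and $s_j^t=a_j$ for $j\ne i$, observe $a^t$, and set $\mathbf{p}^{\ell+1}=\Pi_{\mathcal{P}_i}[\mathbf{p}^\ell-\eta\mathbf{e}_{a_i^t}]$ with $\eta=\sqrt{m_i/L}$ and $\mathcal{P}_i=\{\mathbf{p}\in[0,2]^{A_i}:\langle\mathbf{1},\mathbf{p}\rangle=m_i\}$; then set $\tilde U_i(\cdot,a_{-i})=-\frac1L\sum_{\ell=1}^L\mathbf{p}^\ell$. Output $\tilde U$. For an appropriate choice of $L$, this algorithm $\varepsilon$-learns any game in $\mathrm{poly}(M)/\varepsilon^2$ rounds.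
   Context: A normal-form game has agents $i\in[n]$, finite action sets $A_i$ with $|A_i|=m_i\ge2$, $A=\prod_iA_i$, $m=\max_i m_i$, $M=\prod_i m_i$, and unknown utilities $U_i:A\to[0,1]$. In each round $t\le T$ the principal chooses payments $P_i^t:A_i\to\mathbb{R}_+$ and sends each agent a signal $s_i^t$ from a finite set $S_i$; agent $i$'s utility that round is $U_i^t(a)=U_i(a)+P_i^t(a_i)$; agents choose actions and the principal observes $a^t$. No-regret model: there is a constant $C\le\mathrm{poly}(M)$ such that for every agent $i$, signal $s_i\in S_i$ and every $t\le T$, $\hat R_i(t,s_i):=\max_{a_i\in A_i}\sum_{\tau\le t,\,s_i^\tau=s_i}[U_i^\tau(a_i,a_{-i}^\tau)-U_i^\tau(a^\tau)]\le C\sqrt{T}$. $\Pi$ denotes Euclidean projection, $\mathbf{e}_a$ the unit vector. The principal $\varepsilon$-learns the game if it outputs $\tilde U_i:A\to\mathbb{R}$ such that there exist $W_i:A_{-i}\to\mathbb{R}$ with $|U_i(a)+W_i(a_{-i})-\tilde U_i(a)|\le\varepsilon$ for all $i$ and $a$. *)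

theory Defs
  imports "HOL-Analysis.Analysis" "HOL-Library.FuncSet"
begin

text \<open>Agents are 0,...,n-1; agent i has actions 0,...,m i - 1.
  Action profiles are extensional functions on the agent set.\<close>

definition profiles :: "nat \<Rightarrow> (nat \<Rightarrow> nat) \<Rightarrow> (nat \<Rightarrow> nat) set" where
  "profiles n m = PiE {..<n} (\<lambda>j. {..<m j})"

definition opp_profiles :: "nat \<Rightarrow> (nat \<Rightarrow> nat) \<Rightarrow> nat \<Rightarrow> (nat \<Rightarrow> nat) set" where
  "opp_profiles n m i = PiE ({..<n} - {i}) (\<lambda>j. {..<m j})"

definition polyP :: "nat \<Rightarrow> (nat \<Rightarrow> real) set" where
  "polyP mi = {p. (\<forall>x<mi. 0 \<le> p x \<and> p x \<le> 2) \<and> (\<Sum>x<mi. p x) = real mi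
                   \<and> (\<forall>x\<ge>mi. p x = 0)}"

definition projP :: "nat \<Rightarrow> (nat \<Rightarrow> real) \<Rightarrow> (nat \<Rightarrow> real)" where
  "projP mi q = (THE p. p \<in> polyP mi \<and>
      (\<forall>p'\<in>polyP mi. (\<Sum>x<mi. (q x - p x)^2) \<le> (\<Sum>x<mi. (q x - p' x)^2)))"

text \<open>The iterates p^1, p^2, ... (0-indexed: pseq ... 0 = p^1 = all-ones vector);
  acts l is agent i's action in the l-th round of the block.\<close>
primrec pseq :: "nat \<Rightarrow> real \<Rightarrow> (nat \<Rightarrow> nat) \<Rightarrow> nat \<Rightarrow> nat \<Rightarrow> real" where
  "pseq mi eta acts 0 = (\<lambda>x. if x < mi then 1 else 0)"
| "pseq mi eta acts (Suc l) =
     projP mi (\<lambda>x. pseq mi eta acts l x - eta * (if x = acts l then 1 else 0))"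

text \<open>The schedule: blocks is the list of pairs (i, a_{-i}) processed in order;
  block k occupies rounds k*L, ..., k*L + L - 1 (rounds are 0-indexed).
  a t is the action profile observed in round t.\<close>

definition block_iterate :: "(nat \<Rightarrow> nat) \<Rightarrow> (nat \<times> (nat \<Rightarrow> nat)) list \<Rightarrow> nat
    \<Rightarrow> (nat \<Rightarrow> nat \<Rightarrow> nat) \<Rightarrow> nat \<Rightarrow> nat \<Rightarrow> nat \<Rightarrow> real" where
  "block_iterate m blocks L a k l =
     (let i = fst (blocks ! k)
      in pseq (m i) (sqrt (real (m i) / real L)) (\<lambda>l'. a (k * L + l') i) l)"

definition alg_pay :: "(nat \<Rightarrow> nat) \<Rightarrow> (nat \<times> (nat \<Rightarrow> nat)) list \<Rightarrow> nat
    \<Rightarrow> (nat \<Rightarrow> nat \<Rightarrow> nat) \<Rightarrow> nat \<Rightarrow> nat \<Rightarrow> nat \<Rightarrow> real" where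
  "alg_pay m blocks L a t j x =
     (let k = t div L; (i, b) = blocks ! k
      in if j = i then block_iterate m blocks L a k (t mod L) x
         else (if x = b j then 2 else 0))"

text \<open>Signals: None stands for the extra signal bot.\<close>
definition alg_signal :: "(nat \<times> (nat \<Rightarrow> nat)) list \<Rightarrow> nat \<Rightarrow> nat \<Rightarrow> nat \<Rightarrow> nat option" where
  "alg_signal blocks L t j =
     (let (i, b) = blocks ! (t div L) in if j = i then None else Some (b j))"

definition alg_output :: "nat \<Rightarrow> (nat \<Rightarrow> nat) \<Rightarrow> (nat \<times> (nat \<Rightarrow> nat)) list \<Rightarrow> nat
    \<Rightarrow> (nat \<Rightarrow> nat \<Rightarrow> nat) \<Rightarrow> nat \<Rightarrow> (nat \<Rightarrow> nat) \<Rightarrow> real" where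
  "alg_output n m blocks L a i act =
     (let k = (THE k. k < length blocks \<and> blocks ! k = (i, restrict act ({..<n} - {i})))
      in - (1 / real L) * (\<Sum>l<L. block_iterate m blocks L a k l (act i)))"

definition valid_blocks :: "nat \<Rightarrow> (nat \<Rightarrow> nat) \<Rightarrow> (nat \<times> (nat \<Rightarrow> nat)) list \<Rightarrow> bool" where
  "valid_blocks n m blocks \<longleftrightarrow> distinct blocks \<and> sorted (map fst blocks) \<and>
     set blocks = {(i, b). i < n \<and> b \<in> opp_profiles n m i}"

text \<open>No-regret condition with horizon T and constant C, for payments P t j x,
  signals s t j, and realized profiles a t; sums run over rounds tau < t
  (i.e. rounds 1..t in 1-indexed notation), t \<le> T.\<close>
definition no_regret :: "nat \<Rightarrow> (nat \<Rightarrow> nat) \<Rightarrow> (nat \<Rightarrow> (nat \<Rightarrow> nat) \<Rightarrow> real)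
    \<Rightarrow> (nat \<Rightarrow> nat \<Rightarrow> nat \<Rightarrow> real) \<Rightarrow> (nat \<Rightarrow> nat \<Rightarrow> nat option)
    \<Rightarrow> (nat \<Rightarrow> nat \<Rightarrow> nat) \<Rightarrow> nat \<Rightarrow> real \<Rightarrow> bool" where
  "no_regret n m U P s a T C \<longleftrightarrow>
     (\<forall>j<n. \<forall>sg. (sg = None \<or> (\<exists>y<m j. sg = Some y)) \<longrightarrow>
        (\<forall>t\<le>T. \<forall>x<m j.
           (\<Sum>\<tau>\<in>{\<tau>. \<tau> < t \<and> s \<tau> j = sg}.
               (U j ((a \<tau>)(j := x)) + P \<tau> j x) - (U j (a \<tau>) + P \<tau> j (a \<tau> j)))
           \<le> C * sqrt (real T)))"

definition eps_learns :: "nat \<Rightarrow> (nat \<Rightarrow> nat) \<Rightarrow> (nat \<Rightarrow> (nat \<Rightarrow> nat) \<Rightarrow> real)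
    \<Rightarrow> (nat \<Rightarrow> (nat \<Rightarrow> nat) \<Rightarrow> real) \<Rightarrow> real \<Rightarrow> bool" where
  "eps_learns n m U Ut eps \<longleftrightarrow>
     (\<exists>W :: nat \<Rightarrow> (nat \<Rightarrow> nat) \<Rightarrow> real. \<forall>i<n. \<forall>a\<in>profiles n m.
        \<bar>U i a + W i (restrict a ({..<n} - {i})) - Ut i a\<bar> \<le> eps)"

end

theory Submission
  imports Defs
begin

(*
  In the block for (i, a_-i) every other agent j is told its action in a_-i and paid 2 for
  playing it, so by its no-regret guarantee it disobeys in only O(sqrt T) rounds. In the other
  rounds agent i faces the utility vector u = U_i(., a_-i), while its payments p^l follow
  projected gradient descent against its own play. Comparing them with the indifference payment
  1 + mean u - u, which lies in P_i, bounds agent i's regret in the block from below: for each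
  action x by L times the gap u(x) + avg_l p^l(x) - 1 - mean u, and in total over all actions by
  -O(sqrt L + deviations). Agent i always receives the signal bot, so its no-regret guarantee
  bounds its cumulative regret over its blocks from above at every block boundary; with the
  lower bounds this bounds the regret of every single block for every action from above. Hence
  every gap is at most poly(M) (C + 1) / sqrt L, and since the gaps sum to zero over the
  actions, the same holds in absolute value: -avg_l p^l recovers u up to the shift
  W = -(1 + mean u).
*)

section \<open>Euclidean projection onto the capped simplex\<close>

(* The projection shifts all coordinates by a common c and clips them to [0, 2]; c is chosen so
   that the coordinates sum to mi. *)
definition clip :: "nat \<Rightarrow> (nat \<Rightarrow> real) \<Rightarrow> real \<Rightarrow> nat \<Rightarrow> real" where
  "clip mi z c x = (if x < mi then max 0 (min 2 (z x - c)) else 0)"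

lemma exists_clip_sum_eq: "\<exists>c. (\<Sum>x<mi. clip mi z c x) = real mi"
proof -
  define S where "S = (\<Sum>x<mi. \<bar>z x\<bar>)"
  define g where "g = (\<lambda>c. \<Sum>x<mi. clip mi z c x)"
  have z_le: "\<bar>z x\<bar> \<le> S" if "x < mi" for x
    unfolding S_def using that by (intro member_le_sum) auto
  have "g S = 0"
    unfolding g_def clip_def by (intro sum.neutral ballI) (use z_le in fastforce)
  moreover have "g (- S - 2) = 2 * real mi"
    unfolding g_def clip_def using z_le by (subst sum.cong[OF refl, where h = "\<lambda>_. 2"]) fastforce+
  moreover have "continuous_on {- S - 2..S} g"
    unfolding g_def clip_def by (auto intro!: continuous_intros)
  moreover have "0 \<le> S"
    unfolding S_def by (intro sum_nonneg) auto
  ultimately have "\<exists>c. - S - 2 \<le> c \<and> c \<le> S \<and> g c = real mi"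
    by (intro IVT2') auto
  then show ?thesis
    unfolding g_def by blast
qed

lemma clip_in_polyP:
  assumes "(\<Sum>x<mi. clip mi z c x) = real mi"
  shows "clip mi z c \<in> polyP mi"
  using assms unfolding polyP_def clip_def by auto

lemma clip_obtuse_angle:
  assumes c: "(\<Sum>x<mi. clip mi z c x) = real mi" and p: "p \<in> polyP mi"
  shows "(\<Sum>x<mi. (z x - clip mi z c x) * (p x - clip mi z c x)) \<le> 0"
proof -
  let ?q = "clip mi z c"
  have "(\<Sum>x<mi. (z x - ?q x) * (p x - ?q x)) \<le> (\<Sum>x<mi. c * (p x - ?q x))"
  proof (rule sum_mono)
    \<comment> \<open>\<open>z x - clip x\<close> equals \<open>c\<close> where the clip is inactive, is below \<open>c\<close> where it
      clips to 0 (and \<open>p x \<ge> 0\<close>) and above \<open>c\<close> where it clips to 2 (and \<open>p x \<le> 2\<close>)\<close>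
    fix x assume x: "x \<in> {..<mi}"
    then have "0 \<le> p x" "p x \<le> 2"
      using p by (auto simp: polyP_def)
    consider "z x - c \<le> 0" | "0 \<le> z x - c" "z x - c \<le> 2" | "2 \<le> z x - c"
      by linarith
    then show "(z x - ?q x) * (p x - ?q x) \<le> c * (p x - ?q x)"
      using x \<open>0 \<le> p x\<close> \<open>p x \<le> 2\<close>
      by cases (simp_all add: clip_def mult_right_mono mult_right_mono_neg)
  qed
  also have "\<dots> = c * ((\<Sum>x<mi. p x) - (\<Sum>x<mi. ?q x))"
    by (simp add: sum_distrib_left sum_subtractf right_diff_distrib)
  also have "\<dots> = 0"
    using c p by (simp add: polyP_def)
  finally show ?thesis .
qed

lemma clip_pythagoras:
  assumes "(\<Sum>x<mi. clip mi z c x) = real mi" and "p \<in> polyP mi"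
  shows "(\<Sum>x<mi. (z x - clip mi z c x)\<^sup>2) + (\<Sum>x<mi. (clip mi z c x - p x)\<^sup>2)
           \<le> (\<Sum>x<mi. (z x - p x)\<^sup>2)"
proof -
  let ?q = "clip mi z c"
  have "(\<Sum>x<mi. (z x - p x)\<^sup>2) = (\<Sum>x<mi. (z x - ?q x)\<^sup>2) + (\<Sum>x<mi. (?q x - p x)\<^sup>2)
          - 2 * (\<Sum>x<mi. (z x - ?q x) * (p x - ?q x))"
    by (simp add: sum.distrib sum_subtractf sum_distrib_left power2_eq_square algebra_simps)
  then show ?thesis
    using clip_obtuse_angle[OF assms] by linarith
qed

lemma projP_eq_clip:
  assumes c: "(\<Sum>x<mi. clip mi z c x) = real mi"
  shows "projP mi z = clip mi z c"
  unfolding projP_def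
proof (rule the_equality)
  let ?q = "clip mi z c"
  have dist_nonneg: "0 \<le> (\<Sum>x<mi. (f x)\<^sup>2)" for f :: "nat \<Rightarrow> real"
    by (simp add: sum_nonneg)
  show "?q \<in> polyP mi \<and> (\<forall>p\<in>polyP mi. (\<Sum>x<mi. (z x - ?q x)\<^sup>2) \<le> (\<Sum>x<mi. (z x - p x)\<^sup>2))"
    using clip_in_polyP[OF c] clip_pythagoras[OF c] dist_nonneg
    by (meson add_increasing2 order.trans order_refl)
  fix p
  assume p: "p \<in> polyP mi \<and> (\<forall>p'\<in>polyP mi. (\<Sum>x<mi. (z x - p x)\<^sup>2) \<le> (\<Sum>x<mi. (z x - p' x)\<^sup>2))"
  then have "(\<Sum>x<mi. (?q x - p x)\<^sup>2) \<le> 0"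
    using clip_pythagoras[OF c, of p] clip_in_polyP[OF c] dist_nonneg[of "\<lambda>x. z x - ?q x"]
    by fastforce
  then have "\<forall>x\<in>{..<mi}. (?q x - p x)\<^sup>2 = 0"
    by (intro sum_nonneg_eq_0_iff[THEN iffD1] antisym sum_nonneg) auto
  with p show "p = ?q"
    by (intro ext) (auto simp: polyP_def clip_def not_less)
qed

lemma projP_in_polyP: "projP mi z \<in> polyP mi"
  using exists_clip_sum_eq projP_eq_clip clip_in_polyP by metis

lemma projP_sq_dist_le:
  assumes "p \<in> polyP mi"
  shows "(\<Sum>x<mi. (projP mi z x - p x)\<^sup>2) \<le> (\<Sum>x<mi. (z x - p x)\<^sup>2)"
proof -
  obtain c where c: "(\<Sum>x<mi. clip mi z c x) = real mi"
    using exists_clip_sum_eq by blast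
  have "0 \<le> (\<Sum>x<mi. (z x - clip mi z c x)\<^sup>2)"
    by (simp add: sum_nonneg)
  then show ?thesis
    using clip_pythagoras[OF c assms] projP_eq_clip[OF c] by simp
qed

lemma pseq_in_polyP: "pseq mi eta acts l \<in> polyP mi"
  by (cases l) (simp add: polyP_def, simp only: pseq.simps projP_in_polyP)

section \<open>Regret of projected gradient descent\<close>

lemma sum_sq_diff_after_step:
  fixes p q :: "nat \<Rightarrow> real"
  assumes "a < mi"
  shows "(\<Sum>x<mi. (p x - eta * (if x = a then 1 else 0) - q x)\<^sup>2)
           = (\<Sum>x<mi. (p x - q x)\<^sup>2) - 2 * eta * (p a - q a) + eta\<^sup>2"
proof -
  have "(\<Sum>x<mi. (p x - eta * (if x = a then 1 else 0) - q x)\<^sup>2)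
          = (\<Sum>x<mi. (p x - q x)\<^sup>2 - (if x = a then 2 * eta * (p x - q x) - eta\<^sup>2 else 0))"
    by (intro sum.cong refl) (simp add: power2_eq_square algebra_simps)
  also have "\<dots> = (\<Sum>x<mi. (p x - q x)\<^sup>2) - (2 * eta * (p a - q a) - eta\<^sup>2)"
    using assms by (simp add: sum_subtractf sum.delta)
  finally show ?thesis
    by simp
qed

lemma pseq_regret_telescope:
  assumes "q \<in> polyP mi" and "\<forall>l<L. acts l < mi"
  shows "2 * eta * (\<Sum>l<L. pseq mi eta acts l (acts l) - q (acts l))
           \<le> (\<Sum>x<mi. (pseq mi eta acts 0 x - q x)\<^sup>2) - (\<Sum>x<mi. (pseq mi eta acts L x - q x)\<^sup>2)
              + real L * eta\<^sup>2"
  using assms(2)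
proof (induction L)
  case 0
  then show ?case
    by simp
next
  case (Suc L)
  let ?p = "pseq mi eta acts L"
  have "(\<Sum>x<mi. (pseq mi eta acts (Suc L) x - q x)\<^sup>2)
          \<le> (\<Sum>x<mi. (?p x - eta * (if x = acts L then 1 else 0) - q x)\<^sup>2)"
    using projP_sq_dist_le[OF assms(1)] by simp
  also have "\<dots> = (\<Sum>x<mi. (?p x - q x)\<^sup>2) - 2 * eta * (?p (acts L) - q (acts L)) + eta\<^sup>2"
    using Suc.prems by (intro sum_sq_diff_after_step) simp
  finally show ?case
    using Suc by (simp add: algebra_simps)
qed

lemma pseq_regret_le:
  assumes "q \<in> polyP mi" and "\<forall>l<L. acts l < mi" and "0 < eta"
  shows "(\<Sum>l<L. pseq mi eta acts l (acts l) - q (acts l)) \<le> real mi / (2 * eta) + real L * eta / 2"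
proof -
  have "(1 - q x)\<^sup>2 \<le> 1" if "x < mi" for x
    using assms(1) that by (auto simp: polyP_def abs_le_iff intro!: abs_le_square_iff[of _ 1, simplified, THEN iffD1])
  then have "(\<Sum>x<mi. (pseq mi eta acts 0 x - q x)\<^sup>2) \<le> real mi"
    using sum_mono[of "{..<mi}" "\<lambda>x. (pseq mi eta acts 0 x - q x)\<^sup>2" "\<lambda>_. 1"] by simp
  moreover have "0 \<le> (\<Sum>x<mi. (pseq mi eta acts L x - q x)\<^sup>2)"
    by (simp add: sum_nonneg)
  ultimately have "2 * eta * (\<Sum>l<L. pseq mi eta acts l (acts l) - q (acts l)) \<le> real mi + real L * eta\<^sup>2"
    using pseq_regret_telescope[OF assms(1,2), of eta] by linarith
  with assms(3) show ?thesis
    by (simp add: field_simps power2_eq_square)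
qed

lemma pseq_regret_le_sqrt:
  assumes "q \<in> polyP mi" and "\<forall>l<L. acts l < mi" and "0 < mi" and "0 < L"
  shows "(\<Sum>l<L. pseq mi (sqrt (real mi / real L)) acts l (acts l) - q (acts l))
           \<le> sqrt (real mi * real L)"
proof -
  let ?eta = "sqrt (real mi / real L)"
  have "real mi / (2 * ?eta) + real L * ?eta / 2 = sqrt (real mi * real L)"
  proof -
    define s t where "s = sqrt (real mi)" and "t = sqrt (real L)"
    have "0 < s" "0 < t"
      using assms(3,4) by (simp_all add: s_def t_def)
    moreover have "real mi = s * s" "real L = t * t" "?eta = s / t" "sqrt (real mi * real L) = s * t"
      by (simp_all add: s_def t_def real_sqrt_divide real_sqrt_mult)
    ultimately show ?thesis
      by (simp add: field_simps)
  qed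
  with pseq_regret_le[OF assms(1,2), of ?eta] assms(3,4) show ?thesis
    by simp
qed

section \<open>Regret against the indifference payment\<close>

definition mean :: "nat \<Rightarrow> (nat \<Rightarrow> real) \<Rightarrow> real" where
  "mean mi u = (\<Sum>x<mi. u x) / real mi"

lemma mean_bounds:
  assumes "0 < mi" and "\<forall>x<mi. 0 \<le> u x \<and> u x \<le> 1"
  shows "0 \<le> mean mi u" and "mean mi u \<le> 1"
proof -
  have "0 \<le> (\<Sum>x<mi. u x)"
    using assms(2) by (intro sum_nonneg) simp
  moreover have "(\<Sum>x<mi. u x) \<le> (\<Sum>x<mi. 1)"
    using assms(2) by (intro sum_mono) simp
  ultimately show "0 \<le> mean mi u" "mean mi u \<le> 1"
    using assms(1) by (simp_all add: mean_def divide_le_eq_1)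
qed

lemma indifference_payment_in_polyP:
  assumes "0 < mi" and "\<forall>x<mi. 0 \<le> u x \<and> u x \<le> 1"
  shows "(\<lambda>x. if x < mi then 1 + mean mi u - u x else 0) \<in> polyP mi"
proof -
  have "(\<Sum>x<mi. 1 + mean mi u - u x) = real mi"
    using assms(1) by (simp add: sum.distrib sum_subtractf mean_def algebra_simps)
  then show ?thesis
    using assms mean_bounds[OF assms] by (auto simp: polyP_def)
qed

(* Under the indifference payment 1 + mean u - u every action is worth 1 + mean u, so comparing
   p with it leaves exactly the gap u + p - 1 - mean u. *)
lemma regret_ge_indifference_gap:
  fixes p V :: "nat \<Rightarrow> nat \<Rightarrow> real" and u dev :: "nat \<Rightarrow> real"
  assumes "0 < mi"
    and regret_G: "\<forall>q\<in>polyP mi. (\<Sum>l<L. p l (acts l) - q (acts l)) \<le> G"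
    and acts: "\<forall>l<L. acts l < mi"
    and u: "\<forall>x<mi. 0 \<le> u x \<and> u x \<le> 1"
    and V: "\<forall>l<L. \<forall>x<mi. \<bar>V l x - u x\<bar> \<le> dev l"
    and x: "x < mi"
  shows "real L * (u x - 1 - mean mi u) + (\<Sum>l<L. p l x)
           \<le> (\<Sum>l<L. V l x + p l x - V l (acts l) - p l (acts l)) + G + 2 * (\<Sum>l<L. dev l)"
proof -
  let ?q = "\<lambda>y. if y < mi then 1 + mean mi u - u y else 0"
  have "(\<Sum>l<L. p l (acts l)) \<le> (\<Sum>l<L. ?q (acts l)) + G"
    using regret_G indifference_payment_in_polyP[OF assms(1) u] by (force simp: sum_subtractf)
  also have "(\<Sum>l<L. ?q (acts l)) = real L * (1 + mean mi u) - (\<Sum>l<L. u (acts l))"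
    using acts by (simp add: sum_subtractf)
  finally have "(\<Sum>l<L. p l (acts l)) \<le> real L * (1 + mean mi u) - (\<Sum>l<L. u (acts l)) + G" .
  moreover have "(\<Sum>l<L. u x + p l x - u (acts l) - p l (acts l) - 2 * dev l)
                   \<le> (\<Sum>l<L. V l x + p l x - V l (acts l) - p l (acts l))"
  proof (rule sum_mono)
    fix l assume "l \<in> {..<L}"
    then have "\<bar>V l x - u x\<bar> \<le> dev l" and "\<bar>V l (acts l) - u (acts l)\<bar> \<le> dev l"
      using V x acts by simp_all
    then show "u x + p l x - u (acts l) - p l (acts l) - 2 * dev l
                 \<le> V l x + p l x - V l (acts l) - p l (acts l)"
      by (simp add: abs_le_iff)
  qed
  moreover have "(\<Sum>l<L. u x + p l x - u (acts l) - p l (acts l) - 2 * dev l)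
      = real L * u x + (\<Sum>l<L. p l x) - (\<Sum>l<L. u (acts l)) - (\<Sum>l<L. p l (acts l))
        - 2 * (\<Sum>l<L. dev l)"
    by (simp add: sum.distrib sum_subtractf sum_distrib_left)
  moreover have "real L * (u x - 1 - mean mi u) = real L * u x - real L * (1 + mean mi u)"
    by (simp add: right_diff_distrib distrib_left)
  ultimately show ?thesis
    by linarith
qed

lemma sum_regret_ge:
  fixes p V :: "nat \<Rightarrow> nat \<Rightarrow> real" and u dev :: "nat \<Rightarrow> real"
  assumes "0 < mi"
    and p: "\<forall>l<L. p l \<in> polyP mi"
    and "\<forall>q\<in>polyP mi. (\<Sum>l<L. p l (acts l) - q (acts l)) \<le> G"
    and "\<forall>l<L. acts l < mi"
    and "\<forall>x<mi. 0 \<le> u x \<and> u x \<le> 1"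
    and "\<forall>l<L. \<forall>x<mi. \<bar>V l x - u x\<bar> \<le> dev l"
  shows "- real mi * G - 2 * real mi * (\<Sum>l<L. dev l)
           \<le> (\<Sum>x<mi. \<Sum>l<L. V l x + p l x - V l (acts l) - p l (acts l))"
proof -
  let ?R = "\<lambda>x. \<Sum>l<L. V l x + p l x - V l (acts l) - p l (acts l)"
  let ?D = "\<Sum>l<L. dev l"
  have "(\<Sum>x<mi. real L * (u x - 1 - mean mi u) + (\<Sum>l<L. p l x)) \<le> (\<Sum>x<mi. ?R x + G + 2 * ?D)"
    using regret_ge_indifference_gap[where p = p and V = V and u = u and dev = dev, OF assms(1,3-6)]
    by (intro sum_mono) simp
  also have "\<dots> = (\<Sum>x<mi. ?R x) + real mi * G + 2 * real mi * ?D"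
    by (simp add: sum.distrib)
  finally have "(\<Sum>x<mi. real L * (u x - 1 - mean mi u) + (\<Sum>l<L. p l x))
                  \<le> (\<Sum>x<mi. ?R x) + real mi * G + 2 * real mi * ?D" .
  moreover have "(\<Sum>x<mi. real L * (u x - 1 - mean mi u)) = - (real L * real mi)"
  proof -
    have "(\<Sum>x<mi. real L * (u x - 1 - mean mi u))
            = real L * ((\<Sum>x<mi. u x) - real mi - real mi * mean mi u)"
      by (simp add: sum_distrib_left[symmetric] sum_subtractf)
    then show ?thesis
      using assms(1) by (simp add: mean_def)
  qed
  moreover have "(\<Sum>x<mi. \<Sum>l<L. p l x) = real L * real mi"
    using p by (subst sum.swap) (simp add: polyP_def)
  ultimately show ?thesis
    by (simp add: sum.distrib)
qed

lemma entry_ge_of_sum_ge: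
  fixes f :: "nat \<Rightarrow> real"
  assumes "\<forall>y<mi. f y \<le> B" and "S \<le> (\<Sum>y<mi. f y)" and "x < mi"
  shows "S - (real mi - 1) * B \<le> f x"
proof -
  have "(\<Sum>y<mi. f y) = f x + (\<Sum>y\<in>{..<mi} - {x}. f y)"
    using assms(3) by (simp add: sum.remove)
  moreover have "(\<Sum>y\<in>{..<mi} - {x}. f y) \<le> (\<Sum>y\<in>{..<mi} - {x}. B)"
    using assms(1) by (intro sum_mono) simp
  moreover have "(\<Sum>y\<in>{..<mi} - {x}. B) = (real mi - 1) * B"
    using assms(3) by (simp add: of_nat_diff)
  ultimately show ?thesis
    using assms(2) by linarith
qed

lemma abs_le_of_sum_eq_0:
  fixes f :: "nat \<Rightarrow> real"
  assumes "(\<Sum>y<mi. f y) = 0" and "\<forall>y<mi. f y \<le> e" and "x < mi"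
  shows "\<bar>f x\<bar> \<le> real mi * e"
proof -
  have "0 \<le> (\<Sum>y<mi. e - f y)"
    using assms(2) by (intro sum_nonneg) simp
  then have "0 \<le> e"
    using assms(1,3) by (simp add: sum_subtractf zero_le_mult_iff)
  moreover have "0 - (real mi - 1) * e \<le> f x"
    using entry_ge_of_sum_ge[of mi f e 0 x] assms by simp
  moreover have "f x \<le> e"
    using assms(2,3) by simp
  moreover have "e \<le> real mi * e"
    using \<open>0 \<le> e\<close> assms(3) by (simp add: mult_le_cancel_right1)
  moreover have "(real mi - 1) * e = real mi * e - e"
    by (simp add: left_diff_distrib)
  ultimately show ?thesis
    unfolding abs_le_iff by linarith
qed

(* The prefix sums of r before block k are at most B for every action and sum over the actions
   to at least - (SUM beta), so each is at least - (SUM beta) - (mi - 1) B; adding block k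
   keeps the prefix sum of action x below B. *)
lemma regret_le_of_prefix_bounds:
  fixes r :: "nat \<Rightarrow> nat \<Rightarrow> real" and \<beta> :: "nat \<Rightarrow> real"
  assumes prefix: "\<forall>y<mi. (\<Sum>k'<k. if sel k' then r k' y else 0) \<le> B"
    and prefix_Suc: "(\<Sum>k'<Suc k. if sel k' then r k' x else 0) \<le> B"
    and total: "\<forall>k'<k. sel k' \<longrightarrow> - \<beta> k' \<le> (\<Sum>y<mi. r k' y)"
    and "0 \<le> B" and "\<forall>k'. 0 \<le> \<beta> k'" and "sel k" and "x < mi"
  shows "r k x \<le> real mi * B + (\<Sum>k'<k. \<beta> k')"
proof -
  let ?R = "\<lambda>y. \<Sum>k'<k. if sel k' then r k' y else 0"
  have "(\<Sum>k'<k. - \<beta> k') \<le> (\<Sum>k'<k. if sel k' then (\<Sum>y<mi. r k' y) else 0)"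
    using total assms(5) by (intro sum_mono) auto
  also have "\<dots> = (\<Sum>k'<k. \<Sum>y<mi. if sel k' then r k' y else 0)"
    by (intro sum.cong refl) simp
  also have "\<dots> = (\<Sum>y<mi. ?R y)"
    by (rule sum.swap)
  finally have "- (\<Sum>k'<k. \<beta> k') - (real mi - 1) * B \<le> ?R x"
    by (intro entry_ge_of_sum_ge[OF prefix _ assms(7)]) (simp add: sum_negf)
  moreover have "?R x + r k x \<le> B"
    using prefix_Suc assms(6) by simp
  moreover have "(real mi - 1) * B = real mi * B - B"
    by (simp add: left_diff_distrib)
  ultimately show ?thesis
    by linarith
qed

lemma sum_lessThan_mult_eq:
  fixes f :: "nat \<Rightarrow> real"
  shows "(\<Sum>t<k * L. f t) = (\<Sum>k'<k. \<Sum>l<L. f (k' * L + l))"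
proof -
  have "(\<Sum>t\<in>{k' * L..<k' * L + L}. f t) = (\<Sum>l<L. f (k' * L + l))" for k'
    using sum.shift_bounds_nat_ivl[of f 0 "k' * L" L] by (simp add: atLeast0LessThan add.commute)
  then show ?thesis
    by (simp flip: sum.nat_group)
qed

lemma sum_rounds_of_selected_blocks:
  fixes f :: "nat \<Rightarrow> real"
  assumes "0 < L"
  shows "sum f {t. t < k * L \<and> sel (t div L)} = (\<Sum>k'<k. if sel k' then \<Sum>l<L. f (k' * L + l) else 0)"
proof -
  have "sum f {t. t < k * L \<and> sel (t div L)} = (\<Sum>t<k * L. if sel (t div L) then f t else 0)"
    by (simp add: sum.If_cases Collect_conj_eq lessThan_def Int_commute)
  also have "\<dots> = (\<Sum>k'<k. if sel k' then \<Sum>l<L. f (k' * L + l) else 0)"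
    using assms by (simp add: sum_lessThan_mult_eq) (auto intro: sum.cong)
  finally show ?thesis .
qed

lemma n_le_prod_of_ge_2:
  assumes "\<forall>i<n. 2 \<le> (m :: nat \<Rightarrow> nat) i"
  shows "n \<le> (\<Prod>i<n. m i)"
proof -
  have "(2 :: nat) ^ n \<le> (\<Prod>i<n. m i)"
    using assms prod_mono[of "{..<n}" "\<lambda>_. 2" m] by simp
  then show ?thesis
    using less_exp[of n] by linarith
qed

lemma prod_subset_le_prod:
  assumes "\<forall>i<n. 1 \<le> (m :: nat \<Rightarrow> nat) i" and "I \<subseteq> {..<n}"
  shows "(\<Prod>i\<in>I. m i) \<le> (\<Prod>i<n. m i)"
  using assms by (intro dvd_imp_le prod_dvd_prod_subset) (auto simp: prod_pos)

lemma le_prod_lessThan: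
  assumes "\<forall>i<n. 1 \<le> (m :: nat \<Rightarrow> nat) i" and "i < n"
  shows "m i \<le> (\<Prod>i<n. m i)"
  using prod_subset_le_prod[of n m "{i}"] assms by simp

lemma length_schedule_le:
  assumes "\<forall>i<n. 2 \<le> m i" and "valid_blocks n m blocks"
  shows "length blocks \<le> (\<Prod>i<n. m i)\<^sup>2"
proof -
  have "set blocks = Sigma {..<n} (opp_profiles n m)"
    using assms(2) by (auto simp: valid_blocks_def)
  then have "length blocks = card (Sigma {..<n} (opp_profiles n m))"
    using assms(2) by (metis distinct_card valid_blocks_def)
  also have "\<dots> = (\<Sum>i<n. \<Prod>j\<in>{..<n} - {i}. m j)"
    by (simp add: opp_profiles_def card_PiE finite_PiE)
  also have "\<dots> \<le> (\<Sum>i<n. \<Prod>j<n. m j)"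
    using assms(1) by (intro sum_mono prod_subset_le_prod) auto
  also have "\<dots> \<le> (\<Prod>i<n. m i)\<^sup>2"
    using n_le_prod_of_ge_2[OF assms(1)] by (simp add: power2_eq_square)
  finally show ?thesis .
qed

lemma sum_le_prod_square:
  assumes "\<forall>i<n. 2 \<le> (m :: nat \<Rightarrow> nat) i"
  shows "(\<Sum>i<n. m i) \<le> (\<Prod>i<n. m i)\<^sup>2"
proof -
  have "(\<Sum>i<n. m i) \<le> (\<Sum>i<n. \<Prod>j<n. m j)"
    using assms by (intro sum_mono le_prod_lessThan) auto
  also have "\<dots> \<le> (\<Prod>i<n. m i)\<^sup>2"
    using n_le_prod_of_ge_2[OF assms] by (simp add: power2_eq_square)
  finally show ?thesis .
qed

lemma alg_signal_eq:
  "alg_signal blocks L t j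
     = (if j = fst (blocks ! (t div L)) then None else Some (snd (blocks ! (t div L)) j))"
  by (simp add: alg_signal_def case_prod_beta Let_def)

lemma alg_pay_eq:
  "alg_pay m blocks L a t j x
     = (if j = fst (blocks ! (t div L)) then block_iterate m blocks L a (t div L) (t mod L) x
        else if x = snd (blocks ! (t div L)) j then 2 else 0)"
  by (simp add: alg_pay_def case_prod_beta Let_def)

lemma block_iterate_in_polyP: "block_iterate m blocks L a k l \<in> polyP (m (fst (blocks ! k)))"
  by (simp add: block_iterate_def Let_def pseq_in_polyP)

lemma alg_output_eq:
  assumes "distinct blocks" and "k < length blocks" and "blocks ! k = (i, restrict act ({..<n} - {i}))"
  shows "alg_output n m blocks L a i act = - (\<Sum>l<L. block_iterate m blocks L a k l (act i)) / real L"
proof -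
  have "(THE k'. k' < length blocks \<and> blocks ! k' = (i, restrict act ({..<n} - {i}))) = k"
    using assms by (intro the_equality) (auto, metis nth_eq_iff_index_eq)
  then show ?thesis
    by (simp add: alg_output_def)
qed

lemma error_budget_arith:
  fixes M C s mi N S g r :: real
  assumes "1 \<le> M" "0 \<le> C" "0 \<le> s" "0 \<le> mi" "mi \<le> M" "0 \<le> N" "N \<le> M\<^sup>2" "0 \<le> S" "S \<le> M\<^sup>2"
    and "0 \<le> g" "g \<le> M * s" "0 \<le> r" "r \<le> M * s"
  shows "mi * C * r + N * mi * g + 2 * mi * (S * C * r) + g + 2 * (S * C * r)
           \<le> 7 * M ^ 4 * (C + 1) * s"
proof -
  define X where "X = M ^ 4 * s"
  have "0 \<le> M"
    using assms(1) by simp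
  have to_X: "y \<le> X" if "y \<le> M ^ j * s" and "j \<le> 4" for y j
    using that(1) mult_right_mono[OF power_increasing[OF that(2) assms(1)] assms(3)]
    by (simp add: X_def)
  have powers: "M * (M * s) = M ^ 2 * s" "M\<^sup>2 * (M * s) = M ^ 3 * s" "M * (M ^ 3 * s) = M ^ 4 * s"
    by (simp_all add: power2_eq_square power3_eq_cube power4_eq_xxxx mult.assoc)
  have mi_r: "mi * r \<le> M ^ 2 * s"
    unfolding powers(1)[symmetric] using assms \<open>0 \<le> M\<close> by (intro mult_mono) simp_all
  have N_g: "N * g \<le> M ^ 3 * s"
    unfolding powers(2)[symmetric] by (rule mult_mono) (use assms in simp_all)
  have S_r: "S * r \<le> M ^ 3 * s"
    unfolding powers(2)[symmetric] by (rule mult_mono) (use assms in simp_all)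
  have "mi * (N * g) \<le> M ^ 4 * s"
    unfolding powers(3)[symmetric] by (rule mult_mono) (use N_g assms \<open>0 \<le> M\<close> in simp_all)
  moreover have "mi * (S * r) \<le> M ^ 4 * s"
    unfolding powers(3)[symmetric] by (rule mult_mono) (use S_r assms \<open>0 \<le> M\<close> in simp_all)
  ultimately have bounds: "mi * r \<le> X" "mi * (N * g) \<le> X" "mi * (S * r) \<le> X" "g \<le> X" "S * r \<le> X"
    using mi_r S_r assms(11) to_X[of g 1] by (auto intro: to_X)
  have "0 \<le> X" "0 \<le> C * X"
    using assms(2,3) \<open>0 \<le> M\<close> by (simp_all add: X_def)
  have "mi * C * r + N * mi * g + 2 * mi * (S * C * r) + g + 2 * (S * C * r)
      = C * (mi * r) + mi * (N * g) + 2 * (C * (mi * (S * r))) + g + 2 * (C * (S * r))"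
    by (simp add: algebra_simps)
  also have "\<dots> \<le> C * X + X + 2 * (C * X) + X + 2 * (C * X)"
    using bounds assms(2) by (intro add_mono mult_left_mono) simp_all
  also have "\<dots> \<le> 7 * M ^ 4 * (C + 1) * s"
    using \<open>0 \<le> X\<close> \<open>0 \<le> C * X\<close> by (simp add: X_def algebra_simps)
  finally show ?thesis .
qed

section \<open>A run of the principal's algorithm\<close>

locale principal_run =
  fixes n :: nat and m :: "nat \<Rightarrow> nat" and blocks :: "(nat \<times> (nat \<Rightarrow> nat)) list"
    and L :: nat and U :: "nat \<Rightarrow> (nat \<Rightarrow> nat) \<Rightarrow> real" and a :: "nat \<Rightarrow> nat \<Rightarrow> nat"
    and C :: real
  assumes actions_ge_2: "\<forall>i<n. 2 \<le> m i"
    and C_nonneg: "0 \<le> C"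
    and L_pos: "0 < L"
    and valid: "valid_blocks n m blocks"
    and U_range: "\<forall>i<n. \<forall>b\<in>profiles n m. 0 \<le> U i b \<and> U i b \<le> 1"
    and played_profiles: "\<forall>t<length blocks * L. a t \<in> profiles n m"
    and regret_bounded: "no_regret n m U (alg_pay m blocks L a) (alg_signal blocks L) a
                           (length blocks * L) C"
begin

abbreviation horizon :: nat where
  "horizon \<equiv> length blocks * L"

abbreviation deviation_budget :: real where
  "deviation_budget \<equiv> real (\<Sum>j<n. m j) * C * sqrt (real horizon)"

definition regret :: "nat \<Rightarrow> nat \<Rightarrow> nat \<Rightarrow> real" where
  "regret j t x = (U j ((a t)(j := x)) + alg_pay m blocks L a t j x)
                   - (U j (a t) + alg_pay m blocks L a t j (a t j))"

definition off_schedule :: "nat \<Rightarrow> bool" where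
  "off_schedule t \<longleftrightarrow>
     (\<exists>j<n. j \<noteq> fst (blocks ! (t div L)) \<and> a t j \<noteq> snd (blocks ! (t div L)) j)"

definition block_regret :: "nat \<Rightarrow> nat \<Rightarrow> nat \<Rightarrow> real" where
  "block_regret i k x = (\<Sum>l<L. regret i (k * L + l) x)"

lemma signal_regret_le:
  assumes "j < n" and "sg = None \<or> (\<exists>y<m j. sg = Some y)" and "t \<le> horizon" and "x < m j"
  shows "(\<Sum>\<tau> | \<tau> < t \<and> alg_signal blocks L \<tau> j = sg. regret j \<tau> x) \<le> C * sqrt (real horizon)"
  using regret_bounded assms unfolding no_regret_def regret_def by blast

lemma block_in_schedule:
  assumes "k < length blocks"
  shows "fst (blocks ! k) < n" and "snd (blocks ! k) \<in> opp_profiles n m (fst (blocks ! k))"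
proof -
  have "blocks ! k \<in> {(i, b). i < n \<and> b \<in> opp_profiles n m i}"
    using nth_mem[OF assms] valid by (simp add: valid_blocks_def)
  then show "fst (blocks ! k) < n" and "snd (blocks ! k) \<in> opp_profiles n m (fst (blocks ! k))"
    by (simp_all add: case_prod_beta)
qed

lemma round_in_block:
  assumes "k < length blocks" and "l < L"
  shows "k * L + l < horizon" and "(k * L + l) div L = k" and "(k * L + l) mod L = l"
proof -
  have "k * L + l < Suc k * L"
    using assms(2) by simp
  also have "\<dots> \<le> horizon"
    using assms(1) by (intro mult_le_mono1) simp
  finally show "k * L + l < horizon" .
qed (use assms(2) in simp_all)

(* Obeying the told action y gains the payment 2, more than any difference of utilities. *)
lemma deviation_le_regret:
  assumes "t < horizon" and "j < n" and "y < m j" and "alg_signal blocks L t j = Some y"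
  shows "of_bool (a t j \<noteq> y) \<le> regret j t y"
proof -
  have told: "j \<noteq> fst (blocks ! (t div L))" "snd (blocks ! (t div L)) j = y"
    using assms(4) by (auto simp: alg_signal_eq split: if_splits)
  have "a t \<in> profiles n m" and "(a t)(j := y) \<in> profiles n m"
    using played_profiles assms(1-3) by (auto simp: profiles_def PiE_iff extensional_def)
  then have "0 \<le> U j ((a t)(j := y))" and "U j (a t) \<le> 1"
    using U_range assms(2) by auto
  moreover have "(a t)(j := y) = a t" if "a t j = y"
    using that by auto
  ultimately show ?thesis
    using told by (cases "a t j = y") (simp_all add: regret_def alg_pay_eq)
qed

lemma deviations_of_agent_le:
  assumes "j < n" and "y < m j"
  shows "(\<Sum>t | t < horizon \<and> alg_signal blocks L t j = Some y. of_bool (a t j \<noteq> y) :: real)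
           \<le> C * sqrt (real horizon)"
proof -
  have "(\<Sum>t | t < horizon \<and> alg_signal blocks L t j = Some y. of_bool (a t j \<noteq> y) :: real)
          \<le> (\<Sum>t | t < horizon \<and> alg_signal blocks L t j = Some y. regret j t y)"
    using deviation_le_regret assms by (intro sum_mono) auto
  also have "\<dots> \<le> C * sqrt (real horizon)"
    using signal_regret_le[of j "Some y" horizon y] assms by simp
  finally show ?thesis .
qed

lemma off_schedule_rounds_le:
  "(\<Sum>t<horizon. of_bool (off_schedule t) :: real) \<le> deviation_budget"
proof -
  let ?dev = "\<lambda>j y t. if alg_signal blocks L t j = Some y then of_bool (a t j \<noteq> y) else 0 :: real"
  have "of_bool (off_schedule t) \<le> (\<Sum>j<n. \<Sum>y<m j. ?dev j y t)" if "t < horizon" for t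
  proof (cases "off_schedule t")
    case True
    then obtain j where j: "j < n" "j \<noteq> fst (blocks ! (t div L))" "a t j \<noteq> snd (blocks ! (t div L)) j"
      by (auto simp: off_schedule_def)
    have "t div L < length blocks"
      using that L_pos by (simp add: less_mult_imp_div_less)
    then have "snd (blocks ! (t div L)) j < m j"
      using block_in_schedule j by (auto simp: opp_profiles_def PiE_iff)
    then have "?dev j (snd (blocks ! (t div L)) j) t \<le> (\<Sum>y<m j. ?dev j y t)"
      by (intro member_le_sum) auto
    moreover have "?dev j (snd (blocks ! (t div L)) j) t = 1"
      using j by (simp add: alg_signal_eq)
    ultimately have "1 \<le> (\<Sum>y<m j. ?dev j y t)"
      by simp
    also have "\<dots> \<le> (\<Sum>j<n. \<Sum>y<m j. ?dev j y t)"
      using j(1) by (intro member_le_sum sum_nonneg) auto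
    finally show ?thesis
      using True by simp
  qed (simp add: sum_nonneg)
  then have "(\<Sum>t<horizon. of_bool (off_schedule t) :: real)
              \<le> (\<Sum>t<horizon. \<Sum>j<n. \<Sum>y<m j. ?dev j y t)"
    by (intro sum_mono) simp
  also have "\<dots> = (\<Sum>j<n. \<Sum>y<m j. \<Sum>t<horizon. ?dev j y t)"
    by (subst sum.swap) (intro sum.cong refl sum.swap)
  also have "\<dots> \<le> (\<Sum>j<n. \<Sum>y<m j. C * sqrt (real horizon))"
  proof (intro sum_mono)
    fix j y assume "j \<in> {..<n}" "y \<in> {..<m j}"
    moreover have "{t \<in> {..<horizon}. alg_signal blocks L t j = Some y}
                     = {t. t < horizon \<and> alg_signal blocks L t j = Some y}"
      by auto
    ultimately show "(\<Sum>t<horizon. ?dev j y t) \<le> C * sqrt (real horizon)"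
      using deviations_of_agent_le[of j y] by (simp add: sum.inter_filter[symmetric])
  qed
  also have "\<dots> = deviation_budget"
    by (simp add: sum_distrib_right mult.assoc)
  finally show ?thesis .
qed

lemma prefix_off_schedule_le:
  assumes "k \<le> length blocks"
  shows "(\<Sum>k'<k. \<Sum>l<L. of_bool (off_schedule (k' * L + l)) :: real) \<le> deviation_budget"
proof -
  have "(\<Sum>k'<k. \<Sum>l<L. of_bool (off_schedule (k' * L + l)) :: real)
          = (\<Sum>t<k * L. of_bool (off_schedule t))"
    by (simp add: sum_lessThan_mult_eq)
  also have "\<dots> \<le> (\<Sum>t<horizon. of_bool (off_schedule t))"
    using assms by (intro sum_mono2) auto
  finally show ?thesis
    using off_schedule_rounds_le by linarith
qed

lemma block_off_schedule_le:
  assumes "k < length blocks"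
  shows "(\<Sum>l<L. of_bool (off_schedule (k * L + l)) :: real) \<le> deviation_budget"
proof -
  have "(\<Sum>l<L. of_bool (off_schedule (k * L + l)) :: real)
          \<le> (\<Sum>k'<Suc k. \<Sum>l<L. of_bool (off_schedule (k' * L + l)))"
    by (simp add: sum_nonneg)
  with prefix_off_schedule_le[of "Suc k"] assms show ?thesis
    by simp
qed

lemma block_agent_actions_pos:
  assumes "k < length blocks" and "blocks ! k = (i, b)"
  shows "0 < m i"
  using actions_ge_2 block_in_schedule(1)[OF assms(1)] assms(2) by fastforce

lemma block_actions_less:
  assumes "k < length blocks" and "blocks ! k = (i, b)"
  shows "\<forall>l<L. a (k * L + l) i < m i"
proof (intro allI impI)
  fix l assume "l < L"
  then have "a (k * L + l) \<in> profiles n m"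
    using played_profiles round_in_block(1)[OF assms(1)] by blast
  then show "a (k * L + l) i < m i"
    using block_in_schedule(1)[OF assms(1)] assms(2) by (auto simp: profiles_def PiE_iff)
qed

lemma scheduled_profile:
  assumes "k < length blocks" and "blocks ! k = (i, b)" and "x < m i"
  shows "b(i := x) \<in> profiles n m"
  using block_in_schedule[OF assms(1)] assms(2,3)
  by (auto simp: profiles_def opp_profiles_def PiE_iff extensional_def)

lemma scheduled_utility_range:
  assumes "k < length blocks" and "blocks ! k = (i, b)"
  shows "\<forall>x<m i. 0 \<le> U i (b(i := x)) \<and> U i (b(i := x)) \<le> 1"
  using U_range scheduled_profile[OF assms] block_in_schedule(1)[OF assms(1)] assms(2) by simp

lemma utility_near_schedule_at:
  assumes "k < length blocks" and "blocks ! k = (i, b)" and "l < L" and "x < m i"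
  shows "\<bar>U i ((a (k * L + l))(i := x)) - U i (b(i := x))\<bar> \<le> of_bool (off_schedule (k * L + l))"
proof (cases "off_schedule (k * L + l)")
  case True
  have "i < n"
    using block_in_schedule(1)[OF assms(1)] assms(2) by simp
  moreover have "(a (k * L + l))(i := x) \<in> profiles n m"
    using played_profiles round_in_block(1)[OF assms(1,3)] assms(4) \<open>i < n\<close>
    by (auto simp: profiles_def PiE_iff extensional_def)
  ultimately have "0 \<le> U i ((a (k * L + l))(i := x))" "U i ((a (k * L + l))(i := x)) \<le> 1"
      "0 \<le> U i (b(i := x))" "U i (b(i := x)) \<le> 1"
    using U_range scheduled_profile[OF assms(1,2,4)] by auto
  with True show ?thesis
    by (simp add: abs_le_iff)
next
  case False
  have "a (k * L + l) j = b j" if "j \<noteq> i" for j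
  proof (cases "j < n")
    case True
    then show ?thesis
      using False that assms(2) round_in_block(2)[OF assms(1,3)] by (auto simp: off_schedule_def)
  next
    case False
    then show ?thesis
      using played_profiles round_in_block(1)[OF assms(1,3)] block_in_schedule(2)[OF assms(1)] assms(2)
      by (auto simp: profiles_def opp_profiles_def PiE_iff extensional_def)
  qed
  then have "(a (k * L + l))(i := x) = b(i := x)"
    by auto
  then show ?thesis
    by simp
qed

lemma utility_near_schedule:
  assumes "k < length blocks" and "blocks ! k = (i, b)"
  shows "\<forall>l<L. \<forall>x<m i. \<bar>U i ((a (k * L + l))(i := x)) - U i (b(i := x))\<bar>
                          \<le> of_bool (off_schedule (k * L + l))"
  using utility_near_schedule_at[OF assms] by blast

lemma block_iterate_regret_le:
  assumes "k < length blocks" and "blocks ! k = (i, b)"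
  shows "\<forall>q\<in>polyP (m i). (\<Sum>l<L. block_iterate m blocks L a k l (a (k * L + l) i) - q (a (k * L + l) i))
           \<le> sqrt (real (m i) * real L)"
proof
  fix q assume "q \<in> polyP (m i)"
  from pseq_regret_le_sqrt[OF this block_actions_less[OF assms] block_agent_actions_pos[OF assms] L_pos]
  show "(\<Sum>l<L. block_iterate m blocks L a k l (a (k * L + l) i) - q (a (k * L + l) i))
          \<le> sqrt (real (m i) * real L)"
    using assms(2) by (simp add: block_iterate_def)
qed

(* The error of the output -avg p at (x, b) against the shift W = -(1 + mean u). *)
definition block_error :: "nat \<Rightarrow> nat \<Rightarrow> real" where
  "block_error k x =
     (case blocks ! k of (i, b) \<Rightarrow>
        U i (b(i := x)) + (\<Sum>l<L. block_iterate m blocks L a k l x) / real L - 1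
          - mean (m i) (\<lambda>y. U i (b(i := y))))"

lemma block_regret_eq:
  assumes "k < length blocks" and "blocks ! k = (i, b)"
  shows "block_regret i k x =
           (\<Sum>l<L. U i ((a (k * L + l))(i := x)) + block_iterate m blocks L a k l x
                   - U i ((a (k * L + l))(i := a (k * L + l) i))
                   - block_iterate m blocks L a k l (a (k * L + l) i))"
  unfolding block_regret_def regret_def
  using assms round_in_block[OF assms(1)] by (intro sum.cong refl) (simp add: alg_pay_eq)

lemma block_regret_ge:
  assumes "k < length blocks" and "blocks ! k = (i, b)" and "x < m i"
  shows "real L * block_error k x
           \<le> block_regret i k x + sqrt (real (m i) * real L)
              + 2 * (\<Sum>l<L. of_bool (off_schedule (k * L + l)))"
proof -
  have "real L * block_error k x
          = real L * (U i (b(i := x)) - 1 - mean (m i) (\<lambda>y. U i (b(i := y))))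
            + (\<Sum>l<L. block_iterate m blocks L a k l x)"
    using assms(2) L_pos by (simp add: block_error_def algebra_simps)
  also have "\<dots> \<le> block_regret i k x + sqrt (real (m i) * real L)
                   + 2 * (\<Sum>l<L. of_bool (off_schedule (k * L + l)))"
    unfolding block_regret_eq[OF assms(1,2)]
    by (rule regret_ge_indifference_gap[where p = "block_iterate m blocks L a k" and acts = "\<lambda>l. a (k * L + l) i"
          and V = "\<lambda>l x. U i ((a (k * L + l))(i := x))" and u = "\<lambda>x. U i (b(i := x))"
          and dev = "\<lambda>l. of_bool (off_schedule (k * L + l))",
          OF block_agent_actions_pos[OF assms(1,2)]
          block_iterate_regret_le[OF assms(1,2)] block_actions_less[OF assms(1,2)]
          scheduled_utility_range[OF assms(1,2)] utility_near_schedule[OF assms(1,2)] assms(3)])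
  finally show ?thesis .
qed

lemma block_total_regret_ge:
  assumes "k < length blocks" and "blocks ! k = (i, b)"
  shows "- real (m i) * sqrt (real (m i) * real L)
           - 2 * real (m i) * (\<Sum>l<L. of_bool (off_schedule (k * L + l)))
           \<le> (\<Sum>x<m i. block_regret i k x)"
proof -
  have "\<forall>l<L. block_iterate m blocks L a k l \<in> polyP (m i)"
    using block_iterate_in_polyP[of m blocks L a k] assms(2) by simp
  then show ?thesis
    unfolding block_regret_eq[OF assms(1,2)]
    by (rule sum_regret_ge[where p = "block_iterate m blocks L a k" and acts = "\<lambda>l. a (k * L + l) i"
          and V = "\<lambda>l x. U i ((a (k * L + l))(i := x))" and u = "\<lambda>x. U i (b(i := x))"
          and dev = "\<lambda>l. of_bool (off_schedule (k * L + l))",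
          OF block_agent_actions_pos[OF assms(1,2)] _
          block_iterate_regret_le[OF assms(1,2)] block_actions_less[OF assms(1,2)]
          scheduled_utility_range[OF assms(1,2)] utility_near_schedule[OF assms(1,2)]])
qed

lemma prefix_block_regret_le:
  assumes "k \<le> length blocks" and "i < n" and "y < m i"
  shows "(\<Sum>k'<k. if fst (blocks ! k') = i then block_regret i k' y else 0) \<le> C * sqrt (real horizon)"
proof -
  have "{t. t < k * L \<and> alg_signal blocks L t i = None} = {t. t < k * L \<and> fst (blocks ! (t div L)) = i}"
    by (auto simp: alg_signal_eq)
  then have "(\<Sum>k'<k. if fst (blocks ! k') = i then block_regret i k' y else 0)
               = (\<Sum>t | t < k * L \<and> alg_signal blocks L t i = None. regret i t y)"
    using sum_rounds_of_selected_blocks[OF L_pos, where sel = "\<lambda>k'. fst (blocks ! k') = i"]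
    by (simp add: block_regret_def cong: if_cong)
  also have "\<dots> \<le> C * sqrt (real horizon)"
    using assms by (intro signal_regret_le) auto
  finally show ?thesis .
qed

abbreviation error_budget :: "nat \<Rightarrow> real" where
  "error_budget i \<equiv>
     real (m i) * C * sqrt (real horizon)
     + real (length blocks) * real (m i) * sqrt (real (m i) * real L)
     + 2 * real (m i) * deviation_budget + sqrt (real (m i) * real L) + 2 * deviation_budget"

lemma block_error_sum_eq_0:
  assumes "k < length blocks" and "blocks ! k = (i, b)"
  shows "(\<Sum>x<m i. block_error k x) = 0"
proof -
  have "0 < m i"
    by (rule block_agent_actions_pos[OF assms])
  have "(\<Sum>x<m i. \<Sum>l<L. block_iterate m blocks L a k l x) = real L * real (m i)"
    using block_iterate_in_polyP[of m blocks L a k] assms(2)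
    by (subst sum.swap) (simp add: polyP_def)
  with \<open>0 < m i\<close> L_pos assms(2) show ?thesis
    by (simp add: block_error_def sum.distrib sum_subtractf sum_divide_distrib[symmetric] mean_def)
qed

lemma block_regret_le:
  assumes "k < length blocks" and "blocks ! k = (i, b)" and "x < m i"
  shows "block_regret i k x
           \<le> real (m i) * C * sqrt (real horizon)
              + real (length blocks) * real (m i) * sqrt (real (m i) * real L)
              + 2 * real (m i) * deviation_budget"
proof -
  let ?G = "sqrt (real (m i) * real L)"
  let ?dev = "\<lambda>k. \<Sum>l<L. of_bool (off_schedule (k * L + l)) :: real"
  define \<beta> where "\<beta> k' = real (m i) * ?G + 2 * real (m i) * ?dev k'" for k'
  have i: "i < n"
    using block_in_schedule(1)[OF assms(1)] assms(2) by simp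
  have "block_regret i k x \<le> real (m i) * (C * sqrt (real horizon)) + (\<Sum>k'<k. \<beta> k')"
  proof (rule regret_le_of_prefix_bounds[where sel = "\<lambda>k'. fst (blocks ! k') = i"])
    show "\<forall>k'<k. fst (blocks ! k') = i \<longrightarrow> - \<beta> k' \<le> (\<Sum>y<m i. block_regret i k' y)"
      using block_total_regret_ge assms(1) by (auto simp: \<beta>_def prod_eq_iff)
    show "\<forall>k'. 0 \<le> \<beta> k'"
      by (simp add: \<beta>_def sum_nonneg)
    show "(\<Sum>k'<Suc k. if fst (blocks ! k') = i then block_regret i k' x else 0)
            \<le> C * sqrt (real horizon)"
      using assms i by (intro prefix_block_regret_le) simp_all
  qed (use assms i prefix_block_regret_le C_nonneg in auto)
  moreover have "(\<Sum>k'<k. \<beta> k') = real k * (real (m i) * ?G) + 2 * real (m i) * (\<Sum>k'<k. ?dev k')"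
    by (simp add: \<beta>_def sum.distrib sum_distrib_left)
  moreover have "real k * (real (m i) * ?G) \<le> real (length blocks) * (real (m i) * ?G)"
    using assms(1) by (intro mult_right_mono) simp_all
  moreover have "2 * real (m i) * (\<Sum>k'<k. ?dev k') \<le> 2 * real (m i) * deviation_budget"
    using assms(1) by (intro mult_left_mono prefix_off_schedule_le) simp_all
  ultimately show ?thesis
    by (simp add: algebra_simps)
qed

lemma block_error_le:
  assumes "k < length blocks" and "blocks ! k = (i, b)" and "x < m i"
  shows "real L * block_error k x \<le> error_budget i"
  using block_regret_ge[OF assms] block_regret_le[OF assms] block_off_schedule_le[OF assms(1)]
  by linarith

lemma alg_output_error_le:
  assumes "i < n" and "act \<in> profiles n m"
  shows "\<bar>U i act - (1 + mean (m i) (\<lambda>x. U i ((restrict act ({..<n} - {i}))(i := x))))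
            - alg_output n m blocks L a i act\<bar>
           \<le> real (m i) * (error_budget i / real L)"
proof -
  define b where "b = restrict act ({..<n} - {i})"
  have "b \<in> opp_profiles n m i"
    using assms by (auto simp: b_def opp_profiles_def profiles_def PiE_iff)
  then have "(i, b) \<in> set blocks"
    using valid assms(1) by (simp add: valid_blocks_def)
  then obtain k where k: "k < length blocks" "blocks ! k = (i, b)"
    by (auto simp: in_set_conv_nth)
  have act_eq: "act = b(i := act i)"
    using assms by (auto simp: b_def profiles_def PiE_iff extensional_def)
  have "act i < m i"
    using assms by (auto simp: profiles_def PiE_iff)
  have "alg_output n m blocks L a i act = - (\<Sum>l<L. block_iterate m blocks L a k l (act i)) / real L"
    using valid k by (intro alg_output_eq) (simp_all add: valid_blocks_def b_def)
  then have "U i act - (1 + mean (m i) (\<lambda>x. U i (b(i := x)))) - alg_output n m blocks L a i act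
               = block_error k (act i)"
    using k(2) by (subst act_eq) (simp add: block_error_def)
  moreover have "\<bar>block_error k (act i)\<bar> \<le> real (m i) * (error_budget i / real L)"
  proof (rule abs_le_of_sum_eq_0[OF block_error_sum_eq_0[OF k]])
    show "\<forall>x<m i. block_error k x \<le> error_budget i / real L"
      using block_error_le[OF k] L_pos by (simp add: field_simps)
  qed (rule \<open>act i < m i\<close>)
  ultimately show ?thesis
    unfolding b_def[symmetric] by simp
qed

lemma error_budget_le_poly:
  assumes "i < n"
  shows "error_budget i \<le> 7 * real (\<Prod>i<n. m i) ^ 4 * (C + 1) * sqrt (real L)"
proof -
  define M where "M = real (\<Prod>i<n. m i)"
  define s where "s = sqrt (real L)"
  have mi: "real (m i) \<le> M"
    unfolding M_def using actions_ge_2 assms by (intro of_nat_mono le_prod_lessThan) auto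
  have "1 \<le> real (m i)"
    using actions_ge_2 assms by force
  then have "1 \<le> sqrt (real (m i))"
    by simp
  then have "sqrt (real (m i)) \<le> real (m i)"
    using mult_left_mono[of 1 "sqrt (real (m i))" "sqrt (real (m i))"] by simp
  then have G: "sqrt (real (m i) * real L) \<le> M * s"
    unfolding s_def real_sqrt_mult using mi by (intro mult_right_mono) simp_all
  have N: "real (length blocks) \<le> M\<^sup>2"
    using length_schedule_le[OF actions_ge_2 valid] unfolding M_def by (metis of_nat_le_iff of_nat_power)
  have S: "real (\<Sum>j<n. m j) \<le> M\<^sup>2"
    using sum_le_prod_square[OF actions_ge_2] unfolding M_def by (metis of_nat_le_iff of_nat_power)
  have "sqrt (real (length blocks)) \<le> M"
    using real_sqrt_le_mono[OF N] mi \<open>1 \<le> real (m i)\<close> by simp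
  then have r: "sqrt (real horizon) \<le> M * s"
    unfolding s_def of_nat_mult real_sqrt_mult by (intro mult_right_mono) simp_all
  have "error_budget i \<le> 7 * M ^ 4 * (C + 1) * s"
    using \<open>1 \<le> real (m i)\<close> mi
    by (intro error_budget_arith[OF _ C_nonneg _ _ mi _ N _ S _ G _ r]) (simp_all add: s_def sum_nonneg)
  then show ?thesis
    by (simp only: M_def s_def)
qed

lemma scaled_error_budget_le:
  assumes "i < n"
  shows "real (m i) * (error_budget i / real L)
           \<le> 7 * real (\<Prod>i<n. m i) ^ 5 * (C + 1) / sqrt (real L)"
proof -
  define M where "M = real (\<Prod>i<n. m i)"
  define s where "s = sqrt (real L)"
  have "0 < s" and L_eq: "real L = s * s"
    using L_pos by (simp_all add: s_def)
  have mi: "real (m i) \<le> M"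
    unfolding M_def using actions_ge_2 assms by (intro of_nat_mono le_prod_lessThan) auto
  have "real (m i) * (error_budget i / real L) \<le> real (m i) * (7 * M ^ 4 * (C + 1) * s / real L)"
    using error_budget_le_poly[OF assms] by (intro mult_left_mono divide_right_mono) (simp_all add: M_def s_def)
  also have "\<dots> \<le> M * (7 * M ^ 4 * (C + 1) * s / real L)"
    using mi C_nonneg \<open>0 < s\<close> by (intro mult_right_mono) simp_all
  also have "\<dots> = 7 * (M * M ^ 4) * (C + 1) / s"
    using \<open>0 < s\<close> unfolding L_eq by (simp add: field_simps)
  also have "M * M ^ 4 = M ^ 5"
    by (simp add: eval_nat_numeral)
  finally show ?thesis
    by (simp only: M_def s_def)
qed

theorem eps_learns_alg_output:
  "eps_learns n m U (alg_output n m blocks L a) (7 * real (\<Prod>i<n. m i) ^ 5 * (C + 1) / sqrt (real L))"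
  unfolding eps_learns_def
proof (intro exI allI impI ballI)
  fix i act assume "i < n" and "act \<in> profiles n m"
  from order_trans[OF alg_output_error_le[OF this] scaled_error_budget_le[OF \<open>i < n\<close>]]
  show "\<bar>U i act + - (1 + mean (m i) (\<lambda>x. U i ((restrict act ({..<n} - {i}))(i := x))))
              - alg_output n m blocks L a i act\<bar>
             \<le> 7 * real (\<Prod>i<n. m i) ^ 5 * (C + 1) / sqrt (real L)"
    by (simp only: add_uminus_conv_diff)
qed

end

section \<open>Choice of the block length\<close>

lemma eps_learns_mono:
  assumes "eps_learns n m U Ut eps" and "eps \<le> eps'"
  shows "eps_learns n m U Ut eps'"
  using assms unfolding eps_learns_def by (meson order_trans)

lemma alg_output_learns:
  assumes "\<forall>i<n. 2 \<le> m i" and "0 \<le> C" and "0 < L" and "valid_blocks n m blocks"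
    and "\<forall>i<n. \<forall>b\<in>profiles n m. 0 \<le> U i b \<and> U i b \<le> 1"
    and "\<forall>t<length blocks * L. a t \<in> profiles n m"
    and "no_regret n m U (alg_pay m blocks L a) (alg_signal blocks L) a (length blocks * L) C"
    and "7 * real (\<Prod>i<n. m i) ^ 5 * (C + 1) / sqrt (real L) \<le> eps"
  shows "eps_learns n m U (alg_output n m blocks L a) eps"
  using principal_run.eps_learns_alg_output[OF principal_run.intro[OF assms(1-7)]] assms(8)
  by (rule eps_learns_mono)

lemma exists_rounds_per_block:
  fixes M :: nat and C eps :: real
  assumes "1 \<le> M" and "0 \<le> C" and "0 < eps" and "eps \<le> 1"
  obtains L :: nat where "0 < L" and "7 * real M ^ 5 * (C + 1) / sqrt (real L) \<le> eps"
    and "\<And>N. N \<le> M\<^sup>2 \<Longrightarrow> real (N * L) \<le> 98 * (real M * (C + 1)) ^ 12 / eps\<^sup>2"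
proof -
  define Z where "Z = 7 * real M ^ 5 * (C + 1) / eps"
  have "1 \<le> real M ^ 5"
    using assms(1) by (simp add: one_le_power)
  also have "\<dots> \<le> real M ^ 5 * (C + 1)"
    using assms(2) by (simp add: mult_le_cancel_left1)
  finally have "eps \<le> 7 * real M ^ 5 * (C + 1)"
    using assms(4) by simp
  then have "1 \<le> Z"
    using assms(3) by (simp add: Z_def le_divide_eq)
  define L where "L = nat \<lceil>Z\<^sup>2\<rceil>"
  have "1 \<le> Z\<^sup>2"
    using \<open>1 \<le> Z\<close> by (simp add: one_le_power)
  then have L_le: "real L \<le> 2 * Z\<^sup>2" and "Z\<^sup>2 \<le> real L"
    unfolding L_def by linarith+
  then have "Z \<le> sqrt (real L)"
    using \<open>1 \<le> Z\<close> by (simp add: real_le_rsqrt)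
  show ?thesis
  proof (rule that)
    show "0 < L"
      using \<open>1 \<le> Z\<^sup>2\<close> \<open>Z\<^sup>2 \<le> real L\<close> by simp
    show "7 * real M ^ 5 * (C + 1) / sqrt (real L) \<le> eps"
      using \<open>Z \<le> sqrt (real L)\<close> \<open>1 \<le> Z\<close> assms(3) by (simp add: Z_def divide_le_eq mult.commute)
    fix N assume "N \<le> M\<^sup>2"
    then have "real (N * L) \<le> real M ^ 2 * (2 * Z\<^sup>2)"
      using L_le by (simp add: mult_mono flip: of_nat_power)
    also have "\<dots> = 98 * (real M ^ 12 * (C + 1)\<^sup>2) / eps\<^sup>2"
      by (simp add: Z_def power_divide power_mult_distrib field_simps eval_nat_numeral)
    also have "\<dots> \<le> 98 * (real M ^ 12 * (C + 1) ^ 12) / eps\<^sup>2"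
      using assms(2) by (intro divide_right_mono mult_left_mono power_increasing) simp_all
    finally show "real (N * L) \<le> 98 * (real M * (C + 1)) ^ 12 / eps\<^sup>2"
      by (simp add: power_mult_distrib)
  qed
qed

theorem theorem5p4:
  shows "\<exists>(K::real) (d::nat). \<forall>(n::nat) (m::nat \<Rightarrow> nat) (eps::real) (C::real).
     (\<forall>i<n. 2 \<le> m i) \<and> 0 < eps \<and> eps \<le> 1 \<and> 0 \<le> C \<longrightarrow>
     (\<exists>L::nat. \<forall>blocks. valid_blocks n m blocks \<longrightarrow>
        real (length blocks * L) \<le> K * (real (\<Prod>i<n. m i) * (C + 1)) ^ d / eps ^ 2 \<and>
        (\<forall>(U :: nat \<Rightarrow> (nat \<Rightarrow> nat) \<Rightarrow> real) (a :: nat \<Rightarrow> nat \<Rightarrow> nat).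
           (\<forall>i<n. \<forall>b\<in>profiles n m. 0 \<le> U i b \<and> U i b \<le> 1) \<longrightarrow>
           (\<forall>t<length blocks * L. a t \<in> profiles n m) \<longrightarrow>
           no_regret n m U (alg_pay m blocks L a) (alg_signal blocks L) a
             (length blocks * L) C \<longrightarrow>
           eps_learns n m U (alg_output n m blocks L a) eps))"
  apply (rule exI[of _ "98 :: real"], rule exI[of _ "12 :: nat"], intro allI impI)
  subgoal premises prems for n m eps C
  proof -
    have m2: "\<forall>i<n. 2 \<le> m i" and eps: "0 < eps" "eps \<le> 1" and C: "0 \<le> C"
      using prems by simp_all
    have "1 \<le> (\<Prod>i<n. m i)"
      using m2 by (intro prod_ge_1) auto
    then obtain L where "0 < L" and accurate: "7 * real (\<Prod>i<n. m i) ^ 5 * (C + 1) / sqrt (real L) \<le> eps"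
      and rounds: "\<And>N. N \<le> (\<Prod>i<n. m i)\<^sup>2
                     \<Longrightarrow> real (N * L) \<le> 98 * (real (\<Prod>i<n. m i) * (C + 1)) ^ 12 / eps\<^sup>2"
      using exists_rounds_per_block C eps by blast
    show ?thesis
      using rounds[OF length_schedule_le[OF m2]] alg_output_learns[OF m2 C \<open>0 < L\<close> _ _ _ _ accurate]
      by blast
  qed
  done

end
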